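(* Consider the TEP model described in the context. Let $\rho=(i_0,i_1),(i_1,i_2),\dots,(i_{L-1},i_L)$, $L=|\rho|\ge 1$, be a directed path of buses in which every consecutive pair $\{i_{t-1},i_t\}$ forms an established corridor. For each $t=1,\dots,L$ fix an existing-line index $k_t\in\{1,\dots,\omega^0_{i_{t-1}i_t}\}$ (the choice may differ between corridors). Define the coefficient vector $\boldsymbol{\pi}=(\pi_0,\pi_1,\dots,\pi_L)\in\mathbb{R}^{L+1}$ by $$\pi_0=\sum_{t=1}^{L} x_{i_{t-1}i_t,k_t}\,\overline{P}^0_{i_{t-1}i_t,k_t},\qquad \pi_t=\operatorname{sgn}(i_{t-1}-i_t)\,x_{i_{t-1}i_t,k_t}\quad (t=1,\dots,L).$$ Then the two-sided inequality $$-\pi_0\;\le\;\sum_{t=1}^{L}\pi_t\,\tilde{P}^0_{i_{t-1}i_t,k_t}\;\le\;\pi_0$$ is a valid inequality for TEP, i.e. it is satisfied by every feasible solution of the TEP model, for every such choice of line indices $k_1,\dots,k_L$.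
   Context: TEP model (DC-power-flow transmission expansion planning, disjunctive MILP). $B$ is a finite set of buses (integers); $\Omega$ is a set of corridors $(i,j)$ of buses, stored with $i<j$. Corridor $(i,j)$ has $\omega^0_{ij}\ge 0$ existing lines and $\bar\omega_{ij}\ge0$ candidate lines. Corridor $(i,j)$ is *established* if $\omega^0_{ij}>0$ and an *expansion corridor* if $\omega^0_{ij}=0$. Line $k$ of corridor $(i,j)$ has susceptance $b_{ij,k}$ and reactance $x_{ij,k}=-1/b_{ij,k}$; existing lines have capacity $\overline P^0_{ij,k}$, candidate lines capacity $\overline P_{ij,k}$. Further parameters: demands $d_n$, generation limits $\overline g_n$, angle limit $\overline\theta$, big-M constants $M_{ij}$, costs. Variables: binary $y_{ij,k}$ (build candidate line $k$ of corridor $(i,j)$), flows $P^0_{ij,k}$ (existing lines) and $P_{ij,k}$ (candidate lines), generation $g_n\ge 0$, bus angles $\theta_n$ (free). Constraints: for each bus $n$, $\sum_{(n,i)\in\Omega}\big(\sum_k P^0_{ni,k}+\sum_k P_{ni,k}\big)-\sum_{(i,n)\in\Omega}\big(\sum_k P^0_{in,k}+\sum_k P_{in,k}\big)+g_n=d_n$; $-\overline P^0_{ij,k}\le P^0_{ij,k}\le \overline P^0_{ij,k}$; $-\overline P_{ij,k}y_{ij,k}\le P_{ij,k}\le\overline P_{ij,k}y_{ij,k}$; $x_{ij,k}P^0_{ij,k}-(\theta_i-\theta_j)=0$ for existing lines; $-M_{ij}(1-y_{ij,k})\le x_{ij,k}P_{ij,k}-(\theta_i-\theta_j)\le M_{ij}(1-y_{ij,k})$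 for candidate lines; $g_n\le\overline g_n$; $-\overline\theta\le\theta_i-\theta_j\le\overline\theta$ for $(i,j)\in\Omega$; $y_{ij,k}\in\{0,1\}$. An inequality is *valid for TEP* if every feasible point of this model satisfies it. Notation along paths: for a bus pair traversed as $(i,j)$ with $i>j$ (so the stored corridor is $(j,i)$), set $x_{ij,k}=x_{ji,k}$, $\overline P^0_{ij,k}=\overline P^0_{ji,k}$ and $P^0_{ij,k}=-P^0_{ji,k}$. $\operatorname{sgn}(a)=1$ if $a>0$, $-1$ if $a<0$. Define $\tilde P^0_{ij,k}=\operatorname{sgn}(j-i)\,P^0_{ij,k}$. *)

theory Defs
  imports Main Complex_Main
begin

text \<open>Parameters of the TEP model (costs omitted: they do not affect feasibility).
Corridors are pairs (i,j) with i<j. Existing lines of corridor c are indexed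
k = 1..w0 c, candidate lines k = 1..wc c.\<close>

record tep =
  buses  :: "int set"
  corrs  :: "(int \<times> int) set"
  w0     :: "int \<times> int \<Rightarrow> nat"
  wc     :: "int \<times> int \<Rightarrow> nat"
  b0     :: "int \<times> int \<Rightarrow> nat \<Rightarrow> real"   (* susceptance of existing line k *)
  bc     :: "int \<times> int \<Rightarrow> nat \<Rightarrow> real"   (* susceptance of candidate line k *)
  Pbar0  :: "int \<times> int \<Rightarrow> nat \<Rightarrow> real"
  Pbarc  :: "int \<times> int \<Rightarrow> nat \<Rightarrow> real"
  dem    :: "int \<Rightarrow> real"
  gbar   :: "int \<Rightarrow> real"
  thbar  :: real
  bigM   :: "int \<times> int \<Rightarrow> real"

definition x0 :: "tep \<Rightarrow> int \<times> int \<Rightarrow> nat \<Rightarrow> real" where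
  "x0 T c k = - 1 / b0 T c k"

definition xc :: "tep \<Rightarrow> int \<times> int \<Rightarrow> nat \<Rightarrow> real" where
  "xc T c k = - 1 / bc T c k"

definition tep_wf :: "tep \<Rightarrow> bool" where
  "tep_wf T \<longleftrightarrow> finite (buses T) \<and> finite (corrs T) \<and>
     (\<forall>(i,j)\<in>corrs T. i < j \<and> i \<in> buses T \<and> j \<in> buses T) \<and>
     (\<forall>c\<in>corrs T. \<forall>k\<in>{1..w0 T c}. b0 T c k < 0)"

definition corr_flow :: "tep \<Rightarrow> (int \<times> int \<Rightarrow> nat \<Rightarrow> real) \<Rightarrow> (int \<times> int \<Rightarrow> nat \<Rightarrow> real)
    \<Rightarrow> int \<times> int \<Rightarrow> real" where
  "corr_flow T P0 P c = (\<Sum>k=1..w0 T c. P0 c k) + (\<Sum>k=1..wc T c. P c k)"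

definition tep_feasible :: "tep \<Rightarrow> (int \<times> int \<Rightarrow> nat \<Rightarrow> real) \<Rightarrow> (int \<times> int \<Rightarrow> nat \<Rightarrow> real)
    \<Rightarrow> (int \<times> int \<Rightarrow> nat \<Rightarrow> real) \<Rightarrow> (int \<Rightarrow> real) \<Rightarrow> (int \<Rightarrow> real) \<Rightarrow> bool" where
  "tep_feasible T y P0 P g \<theta> \<longleftrightarrow>
     (\<forall>n\<in>buses T.
        (\<Sum>c\<in>{c\<in>corrs T. fst c = n}. corr_flow T P0 P c)
      - (\<Sum>c\<in>{c\<in>corrs T. snd c = n}. corr_flow T P0 P c) + g n = dem T n) \<and>
     (\<forall>c\<in>corrs T. \<forall>k\<in>{1..w0 T c}.
        - Pbar0 T c k \<le> P0 c k \<and> P0 c k \<le> Pbar0 T c k \<and>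
        x0 T c k * P0 c k - (\<theta> (fst c) - \<theta> (snd c)) = 0) \<and>
     (\<forall>c\<in>corrs T. \<forall>k\<in>{1..wc T c}.
        y c k \<in> {0, 1} \<and>
        - Pbarc T c k * y c k \<le> P c k \<and> P c k \<le> Pbarc T c k * y c k \<and>
        - bigM T c * (1 - y c k) \<le> xc T c k * P c k - (\<theta> (fst c) - \<theta> (snd c)) \<and>
        xc T c k * P c k - (\<theta> (fst c) - \<theta> (snd c)) \<le> bigM T c * (1 - y c k)) \<and>
     (\<forall>n\<in>buses T. 0 \<le> g n \<and> g n \<le> gbar T n) \<and>
     (\<forall>c\<in>corrs T. - thbar T \<le> \<theta> (fst c) - \<theta> (snd c) \<and> \<theta> (fst c) - \<theta> (snd c) \<le> thbar T)"

definition scorr :: "int \<Rightarrow> int \<Rightarrow> int \<times> int" where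
  "scorr i j = (min i j, max i j)"

definition xp :: "tep \<Rightarrow> int \<Rightarrow> int \<Rightarrow> nat \<Rightarrow> real" where
  "xp T i j k = x0 T (scorr i j) k"

definition Pbarp :: "tep \<Rightarrow> int \<Rightarrow> int \<Rightarrow> nat \<Rightarrow> real" where
  "Pbarp T i j k = Pbar0 T (scorr i j) k"

definition P0p :: "(int \<times> int \<Rightarrow> nat \<Rightarrow> real) \<Rightarrow> int \<Rightarrow> int \<Rightarrow> nat \<Rightarrow> real" where
  "P0p P0 i j k = (if i < j then P0 (i, j) k else - P0 (j, i) k)"

definition P0tilde :: "(int \<times> int \<Rightarrow> nat \<Rightarrow> real) \<Rightarrow> int \<Rightarrow> int \<Rightarrow> nat \<Rightarrow> real" where
  "P0tilde P0 i j k = sgn (real_of_int (j - i)) * P0p P0 i j k"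

end

theory Submission
  imports Defs
begin

text \<open>Both sign factors flip together when a path edge runs against the stored corridor
orientation, so each term has absolute value \<open>x |P0|\<close> on an existing line with positive
reactance; the flow limit bounds it by the matching summand of \<open>\<pi>0\<close>, and the triangle
inequality sums the bounds.\<close>

lemma abs_P0p_eq:
  assumes "i \<noteq> j"
  shows "\<bar>P0p P0 i j k\<bar> = \<bar>P0 (scorr i j) k\<bar>"
  using assms by (cases "i < j") (auto simp: P0p_def scorr_def min_def max_def)

lemma abs_sgn_mult_P0tilde:
  assumes "i \<noteq> j"
  shows "\<bar>sgn (real_of_int (i - j)) * a * P0tilde P0 i j k\<bar> = \<bar>a\<bar> * \<bar>P0 (scorr i j) k\<bar>"
proof -
  have "\<bar>sgn (real_of_int (i - j)) * sgn (real_of_int (j - i))\<bar> = 1"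
    using assms by (cases "i < j") (auto simp: sgn_if)
  then show ?thesis
    using abs_P0p_eq[OF assms] unfolding P0tilde_def by (simp add: abs_mult mult_ac)
qed

lemma x0_pos:
  assumes "tep_wf T" and "c \<in> corrs T" and "k \<in> {1..w0 T c}"
  shows "x0 T c k > 0"
  using assms by (auto simp: tep_wf_def x0_def)

lemma abs_P0_le_Pbar0:
  assumes "tep_feasible T y P0 P g \<theta>" and "c \<in> corrs T" and "k \<in> {1..w0 T c}"
  shows "\<bar>P0 c k\<bar> \<le> Pbar0 T c k"
  using assms unfolding tep_feasible_def by fastforce

lemma scorr_distinct:
  assumes "tep_wf T" and "scorr i j \<in> corrs T"
  shows "i \<noteq> j"
  using assms by (auto simp: tep_wf_def scorr_def)

lemma abs_path_term_le:
  assumes wf: "tep_wf T" and feas: "tep_feasible T y P0 P g \<theta>"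
    and c: "scorr i j \<in> corrs T" and k: "k \<in> {1..w0 T (scorr i j)}"
  shows "\<bar>sgn (real_of_int (i - j)) * xp T i j k * P0tilde P0 i j k\<bar> \<le> xp T i j k * Pbarp T i j k"
proof -
  have "\<bar>sgn (real_of_int (i - j)) * xp T i j k * P0tilde P0 i j k\<bar>
      = x0 T (scorr i j) k * \<bar>P0 (scorr i j) k\<bar>"
    using abs_sgn_mult_P0tilde[OF scorr_distinct[OF wf c]] x0_pos[OF wf c k]
    by (simp add: xp_def)
  also have "\<dots> \<le> x0 T (scorr i j) k * Pbar0 T (scorr i j) k"
    using abs_P0_le_Pbar0[OF feas c k] x0_pos[OF wf c k] by simp
  finally show ?thesis by (simp add: xp_def Pbarp_def)
qed

theorem lemma1:
  fixes T :: tep and path :: "int list" and ks :: "nat list"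
    and y P0 P :: "int \<times> int \<Rightarrow> nat \<Rightarrow> real" and g \<theta> :: "int \<Rightarrow> real"
  assumes wf: "tep_wf T"
    and len: "length path = Suc L" and L1: "L \<ge> 1"
    and estab: "\<forall>t<L. scorr (path ! t) (path ! Suc t) \<in> corrs T \<and>
                      w0 T (scorr (path ! t) (path ! Suc t)) > 0"
    and klen: "length ks = L"
    and krange: "\<forall>t<L. 1 \<le> ks ! t \<and> ks ! t \<le> w0 T (scorr (path ! t) (path ! Suc t))"
    and feas: "tep_feasible T y P0 P g \<theta>"
  defines "\<pi>0 \<equiv> (\<Sum>t<L. xp T (path ! t) (path ! Suc t) (ks ! t)
                           * Pbarp T (path ! t) (path ! Suc t) (ks ! t))"
    and "\<pi> \<equiv> (\<lambda>t. sgn (real_of_int (path ! t - path ! Suc t))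
                    * xp T (path ! t) (path ! Suc t) (ks ! t))"
  shows "- \<pi>0 \<le> (\<Sum>t<L. \<pi> t * P0tilde P0 (path ! t) (path ! Suc t) (ks ! t)) \<and>
         (\<Sum>t<L. \<pi> t * P0tilde P0 (path ! t) (path ! Suc t) (ks ! t)) \<le> \<pi>0"
proof -
  let ?S = "\<Sum>t<L. \<pi> t * P0tilde P0 (path ! t) (path ! Suc t) (ks ! t)"
  have "\<bar>?S\<bar> \<le> (\<Sum>t<L. \<bar>\<pi> t * P0tilde P0 (path ! t) (path ! Suc t) (ks ! t)\<bar>)"
    by (rule sum_abs)
  also have "\<dots> \<le> \<pi>0"
    unfolding \<pi>0_def \<pi>_def
  proof (rule sum_mono)
    fix t assume "t \<in> {..<L}"
    then show "\<bar>sgn (real_of_int (path ! t - path ! Suc t)) * xp T (path ! t) (path ! Suc t) (ks ! t)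
        * P0tilde P0 (path ! t) (path ! Suc t) (ks ! t)\<bar>
      \<le> xp T (path ! t) (path ! Suc t) (ks ! t) * Pbarp T (path ! t) (path ! Suc t) (ks ! t)"
      using estab krange by (intro abs_path_term_le[OF wf feas]) auto
  qed
  finally show ?thesis by linarith
qed

end
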